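(* Let $\eta>0$, $\alpha\in(1/2,1)$, $\eta_i=\eta i^{-\alpha}$, and consider $$X_i=(1-\eta_i)X_{i-1}+\eta_ie_i,\ X_0=0;\qquad \widetilde X_i=(1-\eta_i)\widetilde X_{i-1}+\eta_i\widetilde e_i,\ \widetilde X_0=0,$$ where $e_i$ are i.i.d. with $\mathbb{E}e_i=0$, $\mathbb{E}e_i^2=\sigma_e^2$, $\mathbb{E}e_i^4<\infty$, and $\widetilde e_i\overset{\mathrm{i.i.d.}}{\sim}\mathcal N(0,\sigma_e^2)$. For integers $1\le t_i\le i$ let $$\widehat\sigma_n=\frac1n\sum_{i=1}^n\big[X_i^2+2X_i(X_{i-1}+\cdots+X_{t_i})\big],\qquad\widetilde\sigma_n=\frac1n\sum_{i=1}^n\big[\widetilde X_i^2+2\widetilde X_i(\widetilde X_{i-1}+\cdots+\widetilde X_{t_i})\big].$$ Then there exist constants $0\le C_1\le C_2<\infty$, not depending on $n$, such that $C_1\mathrm{Var}(\widetilde\sigma_n)\le\mathrm{Var}(\widehat\sigma_n)\le C_2\mathrm{Var}(\widetilde\sigma_n)$. *)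

theory Defs
  imports "HOL-Probability.Probability"
begin

definition step :: "real \<Rightarrow> real \<Rightarrow> nat \<Rightarrow> real" where
  "step \<eta> \<alpha> i = \<eta> * real i powr (- \<alpha>)"

fun Xseq :: "real \<Rightarrow> real \<Rightarrow> (nat \<Rightarrow> 'a \<Rightarrow> real) \<Rightarrow> nat \<Rightarrow> 'a \<Rightarrow> real" where
  "Xseq \<eta> \<alpha> e 0 \<omega> = 0"
| "Xseq \<eta> \<alpha> e (Suc i) \<omega> =
     (1 - step \<eta> \<alpha> (Suc i)) * Xseq \<eta> \<alpha> e i \<omega> + step \<eta> \<alpha> (Suc i) * e (Suc i) \<omega>"

definition sigma_est :: "real \<Rightarrow> real \<Rightarrow> (nat \<Rightarrow> nat) \<Rightarrow> (nat \<Rightarrow> 'a \<Rightarrow> real) \<Rightarrow> nat \<Rightarrow> 'a \<Rightarrow> real" where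
  "sigma_est \<eta> \<alpha> t e n \<omega> = (1 / real n) *
     (\<Sum>i=1..n. (Xseq \<eta> \<alpha> e i \<omega>)\<^sup>2
        + 2 * Xseq \<eta> \<alpha> e i \<omega> * (\<Sum>j\<in>{t i..<i}. Xseq \<eta> \<alpha> e j \<omega>))"

definition gaussian_rv :: "'b measure \<Rightarrow> ('b \<Rightarrow> real) \<Rightarrow> real \<Rightarrow> bool" where
  "gaussian_rv N X \<sigma> =
     (if \<sigma> = 0 then distr N lborel X = return lborel 0
      else distributed N lborel X (normal_density 0 \<sigma>))"

end

theory Submission
  imports Defs
begin

(* The recursion for X_i is linear with deterministic coefficients, so both estimators are
   one and the same quadratic form  Q = sum_{j,k} A_jk e_j e_k  in the noise, evaluated at
   e and at the Gaussian noise respectively. For independent centred noise with variance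
   sigma^2 and fourth moment mu, expanding the fourth mixed moments gives
     Var Q = sigma^4/2 * sum_{j,k} (A_jk + A_kj)^2 + (mu - 3 sigma^4) * sum_j A_jj^2.
   Gaussian noise has mu = 3 sigma^4, so the two variances differ only by the kurtosis term.
   The diagonal part of the first sum alone is 2 sigma^4 sum_j A_jj^2, hence the kurtosis term
   is at most a fixed multiple of the Gaussian variance in either direction; the resulting
   constants are min and max of 1 and (mu - sigma^4)/(2 sigma^4), which is nonnegative
   because mu - sigma^4 is the variance of e_1^2. Neither the step sizes nor the lags t_i
   play any role. *)

definition quadratic_form ::
    "(nat \<Rightarrow> nat \<Rightarrow> real) \<Rightarrow> nat set \<Rightarrow> (nat \<Rightarrow> 'a \<Rightarrow> real) \<Rightarrow> 'a \<Rightarrow> real" where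
  "quadratic_form A I e x = (\<Sum>j\<in>I. \<Sum>k\<in>I. A j k * e j x * e k x)"

fun Xcoef :: "real \<Rightarrow> real \<Rightarrow> nat \<Rightarrow> nat \<Rightarrow> real" where
  "Xcoef \<eta> \<alpha> 0 j = 0"
| "Xcoef \<eta> \<alpha> (Suc i) j =
     (1 - step \<eta> \<alpha> (Suc i)) * Xcoef \<eta> \<alpha> i j
     + (if j = Suc i then step \<eta> \<alpha> (Suc i) else 0)"

lemma Xseq_eq_sum_Xcoef:
  assumes "i \<le> n"
  shows "Xseq \<eta> \<alpha> e i \<omega> = (\<Sum>j=1..n. Xcoef \<eta> \<alpha> i j * e j \<omega>)"
  using assms
proof (induction i)
  case 0
  then show ?case by simp
next
  case (Suc i)
  let ?s = "step \<eta> \<alpha> (Suc i)"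
  have "(\<Sum>j=1..n. (if j = Suc i then ?s else 0) * e j \<omega>)
      = (\<Sum>j=1..n. if j = Suc i then ?s * e j \<omega> else 0)"
    by (rule sum.cong) auto
  also have "\<dots> = ?s * e (Suc i) \<omega>"
    using Suc.prems by simp
  finally have "Xseq \<eta> \<alpha> e (Suc i) \<omega>
      = (1 - ?s) * (\<Sum>j=1..n. Xcoef \<eta> \<alpha> i j * e j \<omega>)
        + (\<Sum>j=1..n. (if j = Suc i then ?s else 0) * e j \<omega>)"
    using Suc by simp
  also have "\<dots> = (\<Sum>j=1..n. Xcoef \<eta> \<alpha> (Suc i) j * e j \<omega>)"
    unfolding sum_distrib_left sum.distrib[symmetric]
    by (rule sum.cong) (simp_all add: algebra_simps)
  finally show ?case .
qed

definition sigma_coef :: "real \<Rightarrow> real \<Rightarrow> (nat \<Rightarrow> nat) \<Rightarrow> nat \<Rightarrow> nat \<Rightarrow> nat \<Rightarrow> real" where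
  "sigma_coef \<eta> \<alpha> t n j k = (1 / real n) *
     (\<Sum>i=1..n. Xcoef \<eta> \<alpha> i j * (Xcoef \<eta> \<alpha> i k + 2 * (\<Sum>l\<in>{t i..<i}. Xcoef \<eta> \<alpha> l k)))"

lemma sigma_est_eq_quadratic_form:
  "sigma_est \<eta> \<alpha> t e n = quadratic_form (sigma_coef \<eta> \<alpha> t n) {1..n} e"
proof
  fix \<omega>
  let ?c = "Xcoef \<eta> \<alpha>" and ?X = "\<lambda>i. Xseq \<eta> \<alpha> e i \<omega>"
  let ?b = "\<lambda>i k. ?c i k + 2 * (\<Sum>l\<in>{t i..<i}. ?c l k)"
  have summand: "(?X i)\<^sup>2 + 2 * ?X i * (\<Sum>l\<in>{t i..<i}. ?X l)
      = (\<Sum>j=1..n. \<Sum>k=1..n. ?c i j * ?b i k * e j \<omega> * e k \<omega>)" if "i \<in> {1..n}" for i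
  proof -
    have "(\<Sum>l\<in>{t i..<i}. ?X l) = (\<Sum>l\<in>{t i..<i}. \<Sum>k=1..n. ?c l k * e k \<omega>)"
      using that by (intro sum.cong refl Xseq_eq_sum_Xcoef) auto
    also have "\<dots> = (\<Sum>k=1..n. (\<Sum>l\<in>{t i..<i}. ?c l k) * e k \<omega>)"
      by (subst sum.swap) (simp add: sum_distrib_right)
    finally have "?X i + 2 * (\<Sum>l\<in>{t i..<i}. ?X l) = (\<Sum>k=1..n. ?b i k * e k \<omega>)"
      using that Xseq_eq_sum_Xcoef[of i n]
      by (simp add: sum.distrib sum_distrib_left algebra_simps)
    moreover have "?X i = (\<Sum>j=1..n. ?c i j * e j \<omega>)"
      using that by (intro Xseq_eq_sum_Xcoef) auto
    ultimately have "?X i * (?X i + 2 * (\<Sum>l\<in>{t i..<i}. ?X l))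
        = (\<Sum>j=1..n. ?c i j * e j \<omega>) * (\<Sum>k=1..n. ?b i k * e k \<omega>)"
      by simp
    then show ?thesis
      by (simp add: sum_product power2_eq_square algebra_simps)
  qed
  have "sigma_est \<eta> \<alpha> t e n \<omega>
      = (1 / real n) * (\<Sum>i=1..n. \<Sum>j=1..n. \<Sum>k=1..n. ?c i j * ?b i k * e j \<omega> * e k \<omega>)"
    unfolding sigma_est_def using summand by simp
  also have "\<dots> = (1 / real n) * (\<Sum>j=1..n. \<Sum>k=1..n. \<Sum>i=1..n. ?c i j * ?b i k * e j \<omega> * e k \<omega>)"
    by (subst sum.swap, subst (2) sum.swap) (rule refl)
  also have "\<dots> = quadratic_form (sigma_coef \<eta> \<alpha> t n) {1..n} e \<omega>"
    unfolding sigma_coef_def quadratic_form_def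
    by (simp add: sum_distrib_left sum_distrib_right mult.assoc)
  finally show "sigma_est \<eta> \<alpha> t e n \<omega> = quadratic_form (sigma_coef \<eta> \<alpha> t n) {1..n} e \<omega>" .
qed

lemma sum_sum_of_bool_delta:
  fixes A :: "nat \<Rightarrow> nat \<Rightarrow> real"
  assumes "finite I" "j \<in> I" "k \<in> I"
  shows "(\<Sum>l\<in>I. \<Sum>m\<in>I. of_bool (j = l) * of_bool (k = m) * A l m) = A j k"
  using assms by (simp add: mult.assoc flip: sum_distrib_left)

lemma sum_sum_symmetrize:
  fixes A :: "nat \<Rightarrow> nat \<Rightarrow> real"
  shows "(\<Sum>j\<in>I. \<Sum>k\<in>I. A j k * (A j k + A k j)) = (\<Sum>j\<in>I. \<Sum>k\<in>I. (A j k + A k j)\<^sup>2) / 2"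
proof -
  have "(\<Sum>j\<in>I. \<Sum>k\<in>I. (A j k + A k j)\<^sup>2)
      = (\<Sum>j\<in>I. \<Sum>k\<in>I. A j k * (A j k + A k j))
        + (\<Sum>j\<in>I. \<Sum>k\<in>I. A k j * (A k j + A j k))"
    by (simp only: sum.distrib[symmetric]) (simp add: power2_eq_square algebra_simps)
  also have "(\<Sum>j\<in>I. \<Sum>k\<in>I. A k j * (A k j + A j k))
      = (\<Sum>j\<in>I. \<Sum>k\<in>I. A j k * (A j k + A k j))"
    by (rule sum.swap)
  finally show ?thesis
    by simp
qed

lemma sum_diagonal_le_sum_sum_symmetric:
  fixes A :: "nat \<Rightarrow> nat \<Rightarrow> real"
  assumes "finite I"
  shows "4 * (\<Sum>j\<in>I. (A j j)\<^sup>2) \<le> (\<Sum>j\<in>I. \<Sum>k\<in>I. (A j k + A k j)\<^sup>2)"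
proof -
  have "4 * (\<Sum>j\<in>I. (A j j)\<^sup>2) = (\<Sum>j\<in>I. (A j j + A j j)\<^sup>2)"
    by (simp add: sum_distrib_left power2_eq_square algebra_simps)
  also have "\<dots> \<le> (\<Sum>j\<in>I. \<Sum>k\<in>I. (A j k + A k j)\<^sup>2)"
    using assms by (intro sum_mono) (rule member_le_sum; simp)
  finally show ?thesis .
qed

lemma perturbation_bounds:
  fixes G D \<kappa> q :: real
  assumes "0 \<le> D" "q * D \<le> G" "0 < q" "0 \<le> q + \<kappa>"
  shows "min 1 ((q + \<kappa>) / q) * G \<le> G + \<kappa> * D"
    and "G + \<kappa> * D \<le> max 1 ((q + \<kappa>) / q) * G"
proof -
  have "0 \<le> G"
    using assms mult_nonneg_nonneg[of q D] by linarith
  have D: "D \<le> G / q"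
    using assms by (simp add: pos_le_divide_eq mult.commute)
  have scaled: "(q + \<kappa>) / q * G = G + \<kappa> * (G / q)"
    using \<open>0 < q\<close> by (simp add: field_simps)
  let ?r = "(q + \<kappa>) / q"
  have min: "min 1 ?r * G \<le> G" "min 1 ?r * G \<le> ?r * G"
    using mult_right_mono[OF min.cobounded1[of 1 ?r] \<open>0 \<le> G\<close>]
      mult_right_mono[OF min.cobounded2[of 1 ?r] \<open>0 \<le> G\<close>]
    by simp_all
  have max: "G \<le> max 1 ?r * G" "?r * G \<le> max 1 ?r * G"
    using mult_right_mono[OF max.cobounded1[of 1 ?r] \<open>0 \<le> G\<close>]
      mult_right_mono[OF max.cobounded2[of ?r 1] \<open>0 \<le> G\<close>]
    by simp_all
  show "min 1 ?r * G \<le> G + \<kappa> * D"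
  proof (cases "0 \<le> \<kappa>")
    case True
    then show ?thesis
      using min(1) mult_nonneg_nonneg[OF True \<open>0 \<le> D\<close>] by linarith
  next
    case False
    then have "\<kappa> * (G / q) \<le> \<kappa> * D"
      using mult_left_mono_neg[OF D] by simp
    then show ?thesis
      using min(2) scaled by linarith
  qed
  show "G + \<kappa> * D \<le> max 1 ?r * G"
  proof (cases "0 \<le> \<kappa>")
    case True
    then have "\<kappa> * D \<le> \<kappa> * (G / q)"
      using mult_left_mono[OF D] by simp
    then show ?thesis
      using max(2) scaled by linarith
  next
    case False
    then show ?thesis
      using max(1) mult_nonpos_nonneg[of \<kappa> D] \<open>0 \<le> D\<close> by linarith
  qed
qed

lemma kurtosis_variance_bounds:
  fixes A :: "nat \<Rightarrow> nat \<Rightarrow> real" and \<sigma> \<mu> :: real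
  assumes "finite J" "\<sigma> ^ 4 \<le> \<mu>" "\<sigma> = 0 \<Longrightarrow> \<mu> = 0"
  defines "G \<equiv> \<sigma> ^ 4 / 2 * (\<Sum>j\<in>J. \<Sum>k\<in>J. (A j k + A k j)\<^sup>2)"
    and "r \<equiv> (\<mu> - \<sigma> ^ 4) / (2 * \<sigma> ^ 4)"
  shows "min 1 r * G \<le> G + (\<Sum>j\<in>J. (\<mu> - 3 * \<sigma> ^ 4) * (A j j)\<^sup>2)
    \<and> G + (\<Sum>j\<in>J. (\<mu> - 3 * \<sigma> ^ 4) * (A j j)\<^sup>2) \<le> max 1 r * G"
proof (cases "\<sigma> = 0")
  case True
  then show ?thesis
    using assms(3) by (simp add: G_def)
next
  case False
  define D where "D = (\<Sum>j\<in>J. (A j j)\<^sup>2)"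
  have D_eq: "(\<Sum>j\<in>J. (\<mu> - 3 * \<sigma> ^ 4) * (A j j)\<^sup>2) = (\<mu> - 3 * \<sigma> ^ 4) * D"
    and r_eq: "r = (2 * \<sigma> ^ 4 + (\<mu> - 3 * \<sigma> ^ 4)) / (2 * \<sigma> ^ 4)"
    by (simp_all add: D_def r_def sum_distrib_left)
  have "2 * \<sigma> ^ 4 * D \<le> G"
    using mult_left_mono[OF sum_diagonal_le_sum_sum_symmetric[OF assms(1), of A], of "\<sigma> ^ 4 / 2"]
    by (simp add: G_def D_def)
  moreover have "0 \<le> D" "0 < 2 * \<sigma> ^ 4" "0 \<le> 2 * \<sigma> ^ 4 + (\<mu> - 3 * \<sigma> ^ 4)"
    using False assms(2) by (simp_all add: D_def sum_nonneg)
  ultimately show ?thesis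
    unfolding D_eq r_eq using perturbation_bounds by blast
qed

lemma (in prob_space) expectation_eq_if_distr_eq:
  fixes X Y :: "'a \<Rightarrow> real" and f :: "real \<Rightarrow> real"
  assumes "X \<in> borel_measurable M" "Y \<in> borel_measurable M" "distr M borel X = distr M borel Y"
    and "f \<in> borel_measurable borel"
  shows "expectation (\<lambda>x. f (X x)) = expectation (\<lambda>x. f (Y x))"
proof -
  have "integral\<^sup>L (distr M borel X) f = expectation (\<lambda>x. f (X x))"
    using assms(1,4) by (rule integral_distr)
  moreover have "integral\<^sup>L (distr M borel Y) f = expectation (\<lambda>x. f (Y x))"
    using assms(2,4) by (rule integral_distr)
  ultimately show ?thesis
    using assms(3) by simp
qed

lemma integrable_mult_of_square_integrable:
  fixes f g :: "'a \<Rightarrow> real"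
  assumes "f \<in> borel_measurable M" "g \<in> borel_measurable M"
    and "integrable M (\<lambda>x. (f x)\<^sup>2)" "integrable M (\<lambda>x. (g x)\<^sup>2)"
  shows "integrable M (\<lambda>x. f x * g x)"
proof (rule Bochner_Integration.integrable_bound)
  show "integrable M (\<lambda>x. (f x)\<^sup>2 + (g x)\<^sup>2)"
    using assms by simp
  show "AE x in M. norm (f x * g x) \<le> norm ((f x)\<^sup>2 + (g x)\<^sup>2)"
  proof (rule AE_I2)
    fix x
    have "\<bar>f x * g x\<bar> \<le> 2 * \<bar>f x\<bar> * \<bar>g x\<bar>"
      by (simp add: abs_mult)
    also have "\<dots> \<le> \<bar>f x\<bar>\<^sup>2 + \<bar>g x\<bar>\<^sup>2"
      by (rule sum_squares_bound)
    finally show "norm (f x * g x) \<le> norm ((f x)\<^sup>2 + (g x)\<^sup>2)"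
      by simp
  qed
qed (use assms in simp)

lemma (in prob_space) indep_var_component_restrict:
  fixes X :: "'i \<Rightarrow> 'a \<Rightarrow> real"
  assumes "indep_vars (\<lambda>_. borel) X I" "i \<in> I" "J \<subseteq> I" "i \<notin> J"
    and "g \<in> borel_measurable borel" "h \<in> borel_measurable (Pi\<^sub>M J (\<lambda>_. borel))"
  shows "indep_var borel (\<lambda>\<omega>. g (X i \<omega>)) borel (\<lambda>\<omega>. h (\<lambda>j\<in>J. X j \<omega>))"
proof -
  have restrict: "indep_var (Pi\<^sub>M {i} (\<lambda>_. borel)) (\<lambda>\<omega>. \<lambda>j\<in>{i}. X j \<omega>)
      (Pi\<^sub>M J (\<lambda>_. borel)) (\<lambda>\<omega>. \<lambda>j\<in>J. X j \<omega>)"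
    using assms by (intro indep_var_restrict) auto
  have "(\<lambda>y. g (y i)) \<in> borel_measurable (Pi\<^sub>M {i} (\<lambda>_. borel))"
    using assms(5) by measurable
  from indep_var_compose[OF restrict this assms(6)] show ?thesis
    by (simp add: comp_def)
qed

lemma (in prob_space) gaussian_rv_moments:
  assumes gauss: "gaussian_rv M X \<sigma>" and "0 \<le> \<sigma>" and X: "X \<in> borel_measurable M"
  shows "integrable M (\<lambda>x. (X x) ^ 4)" and "expectation X = 0"
    and "expectation (\<lambda>x. (X x)\<^sup>2) = \<sigma>\<^sup>2" and "expectation (\<lambda>x. (X x) ^ 4) = 3 * \<sigma> ^ 4"
proof -
  have moment: "integrable M (\<lambda>x. (X x) ^ k) \<and> expectation (\<lambda>x. (X x) ^ k) =
      (if \<sigma> = 0 then 0 ^ k else integral\<^sup>L lborel (\<lambda>x. normal_density 0 \<sigma> x * x ^ k))" for k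
  proof (cases "\<sigma> = 0")
    case True
    then have "distr M lborel X = return lborel 0"
      using gauss by (simp add: gaussian_rv_def)
    moreover have "integrable M (\<lambda>x. (X x) ^ k) \<longleftrightarrow> integrable (distr M lborel X) (\<lambda>x. x ^ k)"
      and "expectation (\<lambda>x. (X x) ^ k) = integral\<^sup>L (distr M lborel X) (\<lambda>x. x ^ k)"
      using X by (simp_all add: integrable_distr_eq integral_distr)
    ultimately show ?thesis
      using True by (simp add: integrable_iff_bounded nn_integral_return integral_return)
  next
    case False
    then have "0 < \<sigma>" "distributed M lborel X (normal_density 0 \<sigma>)"
      using gauss \<open>0 \<le> \<sigma>\<close> by (simp_all add: gaussian_rv_def)
    then show ?thesis
      using False distributed_integrable[of M lborel X "normal_density 0 \<sigma>" "\<lambda>x. x ^ k"]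
        distributed_integral[of M lborel X "normal_density 0 \<sigma>" "\<lambda>x. x ^ k"]
        integrable_normal_moment[of \<sigma> 0 k]
      by simp
  qed
  show "integrable M (\<lambda>x. (X x) ^ 4)"
    using moment[of 4] by simp
  show "expectation X = 0"
    using moment[of 1] integral_normal_moment_odd[where k=0 and \<mu>=0] \<open>0 \<le> \<sigma>\<close> by simp
  show "expectation (\<lambda>x. (X x)\<^sup>2) = \<sigma>\<^sup>2"
    using moment[of 2] integral_normal_moment_even[where k=1 and \<mu>=0] \<open>0 \<le> \<sigma>\<close>
    by (cases "\<sigma> = 0") (simp_all add: fact_numeral)
  show "expectation (\<lambda>x. (X x) ^ 4) = 3 * \<sigma> ^ 4"
    using moment[of 4] integral_normal_moment_even[where k=2 and \<mu>=0] \<open>0 \<le> \<sigma>\<close>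
    by (cases "\<sigma> = 0") (simp_all add: fact_numeral field_simps)
qed

context prob_space
begin

context
  fixes e :: "nat \<Rightarrow> 'a \<Rightarrow> real" and I :: "nat set" and \<sigma> :: real and \<mu> :: "nat \<Rightarrow> real"
  assumes indep: "indep_vars (\<lambda>_. borel) e I"
    and mean_zero: "\<And>j. j \<in> I \<Longrightarrow> expectation (e j) = 0"
    and second_moment: "\<And>j. j \<in> I \<Longrightarrow> expectation (\<lambda>x. (e j x)\<^sup>2) = \<sigma>\<^sup>2"
    and integrable_fourth: "\<And>j. j \<in> I \<Longrightarrow> integrable M (\<lambda>x. (e j x) ^ 4)"
    and fourth_moment: "\<And>j. j \<in> I \<Longrightarrow> expectation (\<lambda>x. (e j x) ^ 4) = \<mu> j"
begin

lemma noise_measurable: "j \<in> I \<Longrightarrow> e j \<in> borel_measurable M"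
  using indep by (simp add: indep_vars_def)

lemma integrable_noise_square:
  assumes "j \<in> I"
  shows "integrable M (\<lambda>x. (e j x)\<^sup>2)"
proof (rule square_integrable_imp_integrable)
  show "(\<lambda>x. (e j x)\<^sup>2) \<in> borel_measurable M"
    using noise_measurable[OF assms] by simp
  show "integrable M (\<lambda>x. ((e j x)\<^sup>2)\<^sup>2)"
    using integrable_fourth[OF assms] by (simp add: power4_eq_xxxx power2_eq_square mult.assoc)
qed

lemma integrable_noise: "j \<in> I \<Longrightarrow> integrable M (e j)"
  using noise_measurable integrable_noise_square by (rule square_integrable_imp_integrable)

lemma expectation_noise_square_mult:
  assumes "j \<in> I" "k \<in> I" "j \<noteq> k"
  shows "integrable M (\<lambda>x. (e j x)\<^sup>2 * (e k x)\<^sup>2)"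
    and "expectation (\<lambda>x. (e j x)\<^sup>2 * (e k x)\<^sup>2) = \<sigma> ^ 4"
proof -
  have "indep_var borel (\<lambda>x. (e j x)\<^sup>2) borel (\<lambda>x. ((\<lambda>l\<in>{k}. e l x) k)\<^sup>2)"
    using assms by (intro indep_var_component_restrict[OF indep, of j "{k}"]) auto
  then have "indep_var borel (\<lambda>x. (e j x)\<^sup>2) borel (\<lambda>x. (e k x)\<^sup>2)"
    by simp
  then show "integrable M (\<lambda>x. (e j x)\<^sup>2 * (e k x)\<^sup>2)"
    and "expectation (\<lambda>x. (e j x)\<^sup>2 * (e k x)\<^sup>2) = \<sigma> ^ 4"
    using assms integrable_noise_square second_moment
    by (simp_all add: indep_var_integrable indep_var_lebesgue_integral power4_eq_xxxx power2_eq_square)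
qed

lemma fourth_moment_ge:
  assumes "j \<in> I"
  shows "\<sigma> ^ 4 \<le> \<mu> j"
proof -
  have "0 \<le> variance (\<lambda>x. (e j x)\<^sup>2)"
    by (rule variance_positive)
  also have "variance (\<lambda>x. (e j x)\<^sup>2) = \<mu> j - \<sigma> ^ 4"
    using assms integrable_noise_square integrable_fourth fourth_moment second_moment
    by (subst variance_eq) (simp_all add: power4_eq_xxxx power2_eq_square mult.assoc)
  finally show ?thesis
    by simp
qed

lemma fourth_moment_eq_0:
  assumes "\<sigma> = 0" "j \<in> I"
  shows "\<mu> j = 0"
proof -
  have "AE x in M. (e j x)\<^sup>2 = 0"
    using integrable_noise_square[OF assms(2)] second_moment[OF assms(2)] assms(1)
    by (subst integral_nonneg_eq_0_iff_AE[symmetric]) auto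
  then have "AE x in M. (e j x) ^ 4 = 0"
    by eventually_elim simp
  then have "expectation (\<lambda>x. (e j x) ^ 4) = 0"
    by (rule integral_eq_zero_AE)
  then show ?thesis
    using fourth_moment[OF assms(2)] by simp
qed

lemma integrable_noise_mult_square:
  "j \<in> I \<Longrightarrow> k \<in> I \<Longrightarrow> integrable M (\<lambda>x. (e j x * e k x)\<^sup>2)"
  using integrable_fourth[of j] expectation_noise_square_mult(1)[of j k]
  by (cases "j = k") (simp_all add: power_mult_distrib power4_eq_xxxx power2_eq_square mult_ac)

lemma integrable_noise_mult: "j \<in> I \<Longrightarrow> k \<in> I \<Longrightarrow> integrable M (\<lambda>x. e j x * e k x)"
  by (rule integrable_mult_of_square_integrable[OF noise_measurable noise_measurable
        integrable_noise_square integrable_noise_square])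

lemma integrable_noise_mult4:
  assumes "j \<in> I" "k \<in> I" "l \<in> I" "m \<in> I"
  shows "integrable M (\<lambda>x. e j x * e k x * e l x * e m x)"
  using integrable_mult_of_square_integrable[of "\<lambda>x. e j x * e k x" M "\<lambda>x. e l x * e m x"]
    assms noise_measurable integrable_noise_mult_square
  by (simp add: mult.assoc)

lemma expectation_noise_mult:
  assumes "j \<in> I" "k \<in> I"
  shows "expectation (\<lambda>x. e j x * e k x) = \<sigma>\<^sup>2 * of_bool (j = k)"
proof (cases "j = k")
  case True
  then show ?thesis using second_moment[OF assms(1)] by (simp add: power2_eq_square)
next
  case False
  have "indep_var borel (e j) borel (\<lambda>x. (\<lambda>l\<in>{k}. e l x) k)"
    using assms False
    by (intro indep_var_component_restrict[OF indep, of j "{k}" "\<lambda>x. x" "\<lambda>y. y k"]) auto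
  then show ?thesis
    using assms False mean_zero integrable_noise by (simp add: indep_var_lebesgue_integral)
qed

lemma expectation_noise_mult4_lone:
  assumes "j \<in> I" "k \<in> I" "l \<in> I" "m \<in> I" "j \<notin> {k, l, m}"
  shows "expectation (\<lambda>x. e j x * e k x * e l x * e m x) = 0"
proof -
  let ?h = "\<lambda>y :: nat \<Rightarrow> real. y k * y l * y m"
  have "?h \<in> borel_measurable (Pi\<^sub>M {k, l, m} (\<lambda>_. borel))"
    by measurable
  then have "indep_var borel (e j) borel (\<lambda>x. ?h (\<lambda>i\<in>{k, l, m}. e i x))"
    using assms by (intro indep_var_component_restrict[OF indep, of j "{k, l, m}" "\<lambda>x. x"]) auto
  then have "indep_var borel (e j) borel (\<lambda>x. e k x * e l x * e m x)"
    by simp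
  moreover have "integrable M (\<lambda>x. e k x * e l x * e m x)"
    using assms integrable_mult_of_square_integrable[of "e k" M "\<lambda>x. e l x * e m x"]
      noise_measurable integrable_noise_square integrable_noise_mult_square
    by (simp add: mult.assoc)
  ultimately have "expectation (\<lambda>x. e j x * (e k x * e l x * e m x)) = 0"
    using assms mean_zero integrable_noise by (simp add: indep_var_lebesgue_integral)
  then show ?thesis
    by (simp add: mult.assoc)
qed

lemma expectation_noise_mult4:
  assumes "j \<in> I" "k \<in> I" "l \<in> I" "m \<in> I"
  shows "expectation (\<lambda>x. e j x * e k x * e l x * e m x) =
    \<sigma> ^ 4 * (of_bool (j = k) * of_bool (l = m) + of_bool (j = l) * of_bool (k = m)
      + of_bool (k = l) * of_bool (j = m))
    + of_bool (j = k) * (\<mu> j - 3 * \<sigma> ^ 4) * (of_bool (k = l) * of_bool (k = m))"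
proof -
  consider "j = k" "k = l" "l = m" | "j \<notin> {k, l, m}" | "k \<notin> {j, l, m}" | "l \<notin> {j, k, m}"
    | "m \<notin> {j, k, l}" | "j = k" "l = m" "j \<noteq> l" | "j = l" "k = m" "j \<noteq> k"
    | "j = m" "k = l" "j \<noteq> k"
    by auto
  then show ?thesis
  proof cases
    case 1
    then show ?thesis
      using fourth_moment[OF assms(1)] by (simp add: power4_eq_xxxx)
  next
    case 2
    then show ?thesis
      using expectation_noise_mult4_lone[OF assms] by auto
  next
    case 3
    then show ?thesis
      using expectation_noise_mult4_lone[of k j l m] assms by (auto simp: ac_simps)
  next
    case 4
    then show ?thesis
      using expectation_noise_mult4_lone[of l j k m] assms by (auto simp: ac_simps)
  next
    case 5
    then show ?thesis
      using expectation_noise_mult4_lone[of m j k l] assms by (auto simp: ac_simps)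
  next
    case 6
    then show ?thesis
      using expectation_noise_square_mult(2)[of j l] assms by (simp add: power2_eq_square ac_simps)
  next
    case 7
    then show ?thesis
      using expectation_noise_square_mult(2)[of j k] assms by (simp add: power2_eq_square ac_simps)
  next
    case 8
    then show ?thesis
      using expectation_noise_square_mult(2)[of j k] assms by (simp add: power2_eq_square ac_simps)
  qed
qed

lemma quadratic_form_mult_expand:
  "e j x * e k x * quadratic_form A J e x = (\<Sum>l\<in>J. \<Sum>m\<in>J. A l m * (e j x * e k x * e l x * e m x))"
  by (simp add: quadratic_form_def sum_distrib_left ac_simps)

lemma integrable_noise_mult_quadratic_form:
  assumes "J \<subseteq> I" "j \<in> I" "k \<in> I"
  shows "integrable M (\<lambda>x. e j x * e k x * quadratic_form A J e x)"
  unfolding quadratic_form_mult_expand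
  using assms by (intro Bochner_Integration.integrable_sum integrable_mult_right integrable_noise_mult4) auto

lemma expectation_noise_mult_quadratic_form:
  assumes "finite J" "J \<subseteq> I" "j \<in> J" "k \<in> J"
  shows "expectation (\<lambda>x. e j x * e k x * quadratic_form A J e x) =
    \<sigma> ^ 4 * (of_bool (j = k) * (\<Sum>l\<in>J. A l l) + A j k + A k j) + of_bool (j = k) * (\<mu> j - 3 * \<sigma> ^ 4) * A j j"
proof -
  have "expectation (\<lambda>x. e j x * e k x * quadratic_form A J e x)
      = (\<Sum>l\<in>J. \<Sum>m\<in>J. A l m * expectation (\<lambda>x. e j x * e k x * e l x * e m x))"
    unfolding quadratic_form_mult_expand
    using assms integrable_noise_mult4 by (simp add: Bochner_Integration.integral_sum subset_eq)
  also have "\<dots> = (\<Sum>l\<in>J. \<Sum>m\<in>J. \<sigma> ^ 4 * (of_bool (j = k) * (of_bool (l = m) * A l m)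
        + of_bool (j = l) * of_bool (k = m) * A l m + of_bool (k = l) * of_bool (j = m) * A l m)
      + of_bool (j = k) * (\<mu> j - 3 * \<sigma> ^ 4) * (of_bool (k = l) * of_bool (k = m) * A l m))"
    using assms by (intro sum.cong refl) (simp only: subset_eq expectation_noise_mult4, simp add: algebra_simps)
  also have "\<dots> = \<sigma> ^ 4 * (of_bool (j = k) * (\<Sum>l\<in>J. A l l) + A j k + A k j)
      + of_bool (j = k) * (\<mu> j - 3 * \<sigma> ^ 4) * A j j"
    using assms by (simp add: sum.distrib sum_sum_of_bool_delta flip: sum_distrib_left)
  finally show ?thesis .
qed

lemma variance_quadratic_form:
  assumes "finite J" "J \<subseteq> I"
  shows "variance (quadratic_form A J e) =
    \<sigma> ^ 4 / 2 * (\<Sum>j\<in>J. \<Sum>k\<in>J. (A j k + A k j)\<^sup>2) + (\<Sum>j\<in>J. (\<mu> j - 3 * \<sigma> ^ 4) * (A j j)\<^sup>2)"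
proof -
  let ?Q = "quadratic_form A J e"
  define tr where "tr = (\<Sum>j\<in>J. A j j)"
  define S where "S = (\<Sum>j\<in>J. \<Sum>k\<in>J. A j k * (A j k + A k j))"
  define K where "K = (\<Sum>j\<in>J. (\<mu> j - 3 * \<sigma> ^ 4) * (A j j)\<^sup>2)"
  have square: "(?Q x)\<^sup>2 = (\<Sum>j\<in>J. \<Sum>k\<in>J. A j k * (e j x * e k x * ?Q x))" for x
  proof -
    have "(?Q x)\<^sup>2 = (\<Sum>j\<in>J. \<Sum>k\<in>J. A j k * e j x * e k x) * ?Q x"
      by (simp add: power2_eq_square quadratic_form_def[of A J e x])
    then show ?thesis
      by (simp add: sum_distrib_right mult.assoc)
  qed
  have form: "?Q = (\<lambda>x. \<Sum>j\<in>J. \<Sum>k\<in>J. A j k * (e j x * e k x))"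
    by (simp add: fun_eq_iff quadratic_form_def mult.assoc)
  have "expectation ?Q = (\<Sum>j\<in>J. \<Sum>k\<in>J. A j k * expectation (\<lambda>x. e j x * e k x))"
    unfolding form using assms integrable_noise_mult by (simp add: Bochner_Integration.integral_sum subset_eq)
  also have "\<dots> = (\<Sum>j\<in>J. \<Sum>k\<in>J. A j k * \<sigma>\<^sup>2 * of_bool (j = k))"
    using assms by (intro sum.cong refl) (simp add: expectation_noise_mult subset_eq)
  also have "\<dots> = tr * \<sigma>\<^sup>2"
    using assms by (simp add: tr_def sum_distrib_right)
  finally have mean: "expectation ?Q = tr * \<sigma>\<^sup>2" .
  have "expectation (\<lambda>x. (?Q x)\<^sup>2) = (\<Sum>j\<in>J. \<Sum>k\<in>J. A j k *
      (\<sigma> ^ 4 * (of_bool (j = k) * tr + A j k + A k j) + of_bool (j = k) * (\<mu> j - 3 * \<sigma> ^ 4) * A j j))"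
    unfolding square tr_def using assms integrable_noise_mult_quadratic_form
    by (simp add: Bochner_Integration.integral_sum expectation_noise_mult_quadratic_form subset_eq)
  also have "\<dots> = (\<Sum>j\<in>J. \<Sum>k\<in>J. \<sigma> ^ 4 * tr * (A j k * of_bool (j = k))
      + \<sigma> ^ 4 * (A j k * (A j k + A k j)) + (\<mu> j - 3 * \<sigma> ^ 4) * A j j * (A j k * of_bool (j = k)))"
    by (intro sum.cong refl) (simp add: algebra_simps)
  also have "\<dots> = \<sigma> ^ 4 * tr * tr + \<sigma> ^ 4 * S + K"
    using assms by (simp add: tr_def S_def K_def sum.distrib power2_eq_square mult.assoc flip: sum_distrib_left)
  finally have second: "expectation (\<lambda>x. (?Q x)\<^sup>2) = \<sigma> ^ 4 * tr * tr + \<sigma> ^ 4 * S + K" .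
  have "integrable M ?Q"
    unfolding form using assms
    by (intro Bochner_Integration.integrable_sum integrable_mult_right integrable_noise_mult) auto
  moreover have "integrable M (\<lambda>x. (?Q x)\<^sup>2)"
    unfolding square using assms
    by (intro Bochner_Integration.integrable_sum integrable_mult_right integrable_noise_mult_quadratic_form) auto
  ultimately have "variance ?Q = expectation (\<lambda>x. (?Q x)\<^sup>2) - (expectation ?Q)\<^sup>2"
    by (rule variance_eq)
  also have "\<dots> = \<sigma> ^ 4 * S + K"
    unfolding mean second by (simp add: power2_eq_square power4_eq_xxxx algebra_simps)
  finally show ?thesis
    by (simp add: S_def K_def sum_sum_symmetrize)
qed

end

end

theorem lemmaC4:
  fixes M :: "'a measure" and N :: "'b measure"
    and e :: "nat \<Rightarrow> 'a \<Rightarrow> real" and et :: "nat \<Rightarrow> 'b \<Rightarrow> real"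
    and \<eta> \<alpha> \<sigma> :: real and t :: "nat \<Rightarrow> nat"
  assumes "prob_space M" and "prob_space N"
    and "\<eta> > 0" and "1/2 < \<alpha>" and "\<alpha> < 1"
    and "\<sigma> \<ge> 0"
    and "\<And>i. i \<ge> 1 \<Longrightarrow> e i \<in> borel_measurable M"
    and "prob_space.indep_vars M (\<lambda>_. borel) e {1..}"
    and "\<And>i. i \<ge> 1 \<Longrightarrow> distr M borel (e i) = distr M borel (e 1)"
    and "\<And>i. i \<ge> 1 \<Longrightarrow> prob_space.expectation M (e i) = 0"
    and "\<And>i. i \<ge> 1 \<Longrightarrow> prob_space.expectation M (\<lambda>x. (e i x)\<^sup>2) = \<sigma>\<^sup>2"
    and "\<And>i. i \<ge> 1 \<Longrightarrow> integrable M (\<lambda>x. (e i x) ^ 4)"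
    and "\<And>i. i \<ge> 1 \<Longrightarrow> et i \<in> borel_measurable N"
    and "prob_space.indep_vars N (\<lambda>_. borel) et {1..}"
    and "\<And>i. i \<ge> 1 \<Longrightarrow> gaussian_rv N (et i) \<sigma>"
    and "\<And>i. i \<ge> 1 \<Longrightarrow> 1 \<le> t i \<and> t i \<le> i"
  shows "\<exists>C1 C2. 0 \<le> C1 \<and> C1 \<le> C2 \<and>
    (\<forall>n\<ge>1. C1 * prob_space.variance N (sigma_est \<eta> \<alpha> t et n)
                \<le> prob_space.variance M (sigma_est \<eta> \<alpha> t e n)
          \<and> prob_space.variance M (sigma_est \<eta> \<alpha> t e n)
                \<le> C2 * prob_space.variance N (sigma_est \<eta> \<alpha> t et n))"
proof -
  interpret M: prob_space M by fact
  interpret N: prob_space N by fact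
  define \<mu> where "\<mu> = M.expectation (\<lambda>x. (e 1 x) ^ 4)"
  have M_fourth: "M.expectation (\<lambda>x. (e i x) ^ 4) = \<mu>" if "i \<in> {1..}" for i
    unfolding \<mu>_def using assms(7)[of i] assms(7)[of 1] assms(9)[of i] that
    by (intro M.expectation_eq_if_distr_eq) auto
  have M_moments: "M.expectation (e i) = 0" "M.expectation (\<lambda>x. (e i x)\<^sup>2) = \<sigma>\<^sup>2"
    "integrable M (\<lambda>x. (e i x) ^ 4)" "M.expectation (\<lambda>x. (e i x) ^ 4) = \<mu>" if "i \<in> {1..}" for i
    using assms(10-12) M_fourth that by auto
  note M_noise = assms(8) M_moments
  have N_moments: "N.expectation (et i) = 0" "N.expectation (\<lambda>x. (et i x)\<^sup>2) = \<sigma>\<^sup>2"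
    "integrable N (\<lambda>x. (et i x) ^ 4)" "N.expectation (\<lambda>x. (et i x) ^ 4) = 3 * \<sigma> ^ 4"
    if "i \<in> {1..}" for i
    using N.gaussian_rv_moments[OF assms(15) assms(6) assms(13)] that by auto
  note N_noise = assms(14) N_moments
  have kurtosis: "\<sigma> ^ 4 \<le> \<mu>" and degenerate: "\<sigma> = 0 \<Longrightarrow> \<mu> = 0"
    using M.fourth_moment_ge[OF M_noise, of 1] M.fourth_moment_eq_0[OF M_noise, of 1] by auto
  define r where "r = (\<mu> - \<sigma> ^ 4) / (2 * \<sigma> ^ 4)"
  have "min 1 r * N.variance (sigma_est \<eta> \<alpha> t et n) \<le> M.variance (sigma_est \<eta> \<alpha> t e n)
      \<and> M.variance (sigma_est \<eta> \<alpha> t e n) \<le> max 1 r * N.variance (sigma_est \<eta> \<alpha> t et n)" for n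
  proof -
    have J: "finite {1..n}" "{1..n} \<subseteq> {1..}"
      by auto
    have M_var: "M.variance (quadratic_form A {1..n} e)
        = \<sigma> ^ 4 / 2 * (\<Sum>j\<in>{1..n}. \<Sum>k\<in>{1..n}. (A j k + A k j)\<^sup>2)
          + (\<Sum>j\<in>{1..n}. (\<mu> - 3 * \<sigma> ^ 4) * (A j j)\<^sup>2)" for A
      using M.variance_quadratic_form[OF M_noise J] by simp
    have N_var: "N.variance (quadratic_form A {1..n} et)
        = \<sigma> ^ 4 / 2 * (\<Sum>j\<in>{1..n}. \<Sum>k\<in>{1..n}. (A j k + A k j)\<^sup>2)" for A
      using N.variance_quadratic_form[OF N_noise J] by simp
    show ?thesis
      unfolding sigma_est_eq_quadratic_form M_var N_var r_def
      by (rule kurtosis_variance_bounds[OF J(1) kurtosis degenerate])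
  qed
  moreover have "0 \<le> r"
    using kurtosis by (simp add: r_def)
  ultimately show ?thesis
    by (intro exI[of _ "min 1 r"] exI[of _ "max 1 r"]) auto
qed

end
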